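(* Let $U$ be a real separable Hilbert space and let $-A\colon\mathsf D(A)\subseteq U\to U$ generate a $C_0$-semigroup $(S(t))_{t\ge0}$ on $U$ such that $\|S(t)\|_{\mathscr L(U)}\le M_0e^{-wt}$ for all $t\ge0$, for some $M_0\in[1,\infty)$, $w\in(0,\infty)$. If $Q\in\mathscr L^+(U)$ and $\gamma_0\in(-\infty,\tfrac12]$, then \[ \int_0^\infty\|t^{\gamma_0-1}S(t)Q^{1/2}\|^2_{\mathscr L_2(U)}\,dt=\infty. \]
   Context: $\mathscr L^+(U)$: self-adjoint $T\in\mathscr L(U)$ with $\langle Tx,x\rangle_U\ge\theta\|x\|_U^2$ for some $\theta>0$. $\mathscr L_2(U)$: Hilbert–Schmidt operators on $U$. *)

theory Defs
  imports "HOL-Analysis.Analysis"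
begin

definition c0_semigroup :: "(real \<Rightarrow> ('a::real_normed_vector \<Rightarrow>\<^sub>L 'a)) \<Rightarrow> bool" where
  "c0_semigroup S \<longleftrightarrow>
     S 0 = id_blinfun \<and>
     (\<forall>s\<ge>0. \<forall>t\<ge>0. S (s + t) = S s o\<^sub>L S t) \<and>
     (\<forall>x. ((\<lambda>t. blinfun_apply (S t) x) \<longlongrightarrow> x) (at_right 0))"

definition is_generator ::
  "(real \<Rightarrow> ('a::real_normed_vector \<Rightarrow>\<^sub>L 'a)) \<Rightarrow> 'a set \<Rightarrow> ('a \<Rightarrow> 'a) \<Rightarrow> bool" where
  "is_generator S D B \<longleftrightarrow>
     c0_semigroup S \<and>
     D = {x. \<exists>y. ((\<lambda>t. (1 / t) *\<^sub>R (S t x - x)) \<longlongrightarrow> y) (at_right 0)} \<and>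
     (\<forall>x\<in>D. ((\<lambda>t. (1 / t) *\<^sub>R (S t x - x)) \<longlongrightarrow> B x) (at_right 0))"

definition self_adjoint_op :: "('a::real_inner \<Rightarrow>\<^sub>L 'a) \<Rightarrow> bool" where
  "self_adjoint_op T \<longleftrightarrow> (\<forall>x y. inner (T x) y = inner x (T y))"

definition pos_def_op :: "('a::real_inner \<Rightarrow>\<^sub>L 'a) \<Rightarrow> bool" where
  "pos_def_op T \<longleftrightarrow> self_adjoint_op T \<and> (\<exists>\<theta>>0. \<forall>x. inner (T x) x \<ge> \<theta> * (norm x)\<^sup>2)"

definition op_sqrt :: "('a::real_inner \<Rightarrow>\<^sub>L 'a) \<Rightarrow> ('a \<Rightarrow>\<^sub>L 'a)" where
  "op_sqrt T = (THE R. self_adjoint_op R \<and> (\<forall>x. inner (R x) x \<ge> 0) \<and> R o\<^sub>L R = T)"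

definition orthonormal_basis :: "'a::real_inner set \<Rightarrow> bool" where
  "orthonormal_basis B \<longleftrightarrow>
     (\<forall>e\<in>B. norm e = 1) \<and> (\<forall>e\<in>B. \<forall>f\<in>B. e \<noteq> f \<longrightarrow> inner e f = 0) \<and>
     closure (span B) = UNIV"

definition hs_norm_sq :: "('a::real_inner \<Rightarrow>\<^sub>L 'a) \<Rightarrow> ennreal" where
  "hs_norm_sq T = (\<Sum>\<^sub>\<infinity> e \<in> (SOME B. orthonormal_basis B). ennreal ((norm (T e))\<^sup>2))"

end

theory Submission
  imports Defs
begin

text \<open>
  Only the behaviour of the integrand as t tends to 0 matters. Let e be a unit vector of the orthonormal basis defining the Hilbert-Schmidt norm
  and v = Q^(1/2) e, which is nonzero because Q is positive definite. By strong continuity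
  |S(t) v| >= |v|/2 for small t, so near 0 the integrand is at least
  t^(2 gamma0 - 2) |v|^2 / 4 >= |v|^2 / (4 t), which is not integrable.

  The work lies in making the statement meaningful. A separable space has an orthonormal basis
  (Gram-Schmidt applied to a dense sequence), and Q has a unique nonnegative square root: for
  c > |Q| the operator K = I - Q/c has norm < 1, the binomial series of sqrt(1 - z) defines
  (I - K)^(1/2), and sqrt c (I - K)^(1/2) is the root. It is unique because every nonnegative
  square root of Q commutes with Q, hence with K and with the series.
\<close>

section \<open>Absolutely convergent series in complete spaces\<close>

text \<open>The library's \<open>summable_norm_cancel\<close> is stated for class \<open>banach\<close>, which the sort
  \<open>{real_normed_vector, complete_space}\<close> of the theorem does not entail.\<close>

lemma summable_norm_cancel_complete:
  fixes f :: "nat \<Rightarrow> 'a::{real_normed_vector, complete_space}"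
  assumes f: "summable (\<lambda>n. norm (f n))"
  shows "summable f"
proof (rule summable_bounded_partials)
  let ?N = "\<lambda>n. norm (f n)"
  show "\<forall>\<^sub>F a0 in sequentially. \<forall>a\<ge>a0. \<forall>b>a. norm (sum f {a<..b}) \<le> suminf ?N - sum ?N {..a}"
  proof (intro always_eventually allI impI)
    fix a b :: nat
    assume "a < b"
    have "norm (sum f {a<..b}) \<le> sum ?N {a<..b}"
      by (rule norm_sum)
    also have "\<dots> = sum ?N {..b} - sum ?N {..a}"
    proof -
      have "{a<..b} = {..b} - {..a}"
        using \<open>a < b\<close> by auto
      then show ?thesis
        using \<open>a < b\<close> by (simp add: sum_diff)
    qed
    also have "\<dots> \<le> suminf ?N - sum ?N {..a}"
      using sum_le_suminf[OF f, of "{..b}"] by simp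
    finally show "norm (sum f {a<..b}) \<le> suminf ?N - sum ?N {..a}" .
  qed
  show "(\<lambda>a. suminf ?N - sum ?N {..a}) \<longlonglongrightarrow> 0"
    using tendsto_diff[OF tendsto_const[of "suminf ?N"] summable_LIMSEQ'[OF f]] by simp
qed

lemma sums_norm_le:
  fixes f :: "nat \<Rightarrow> 'a::real_normed_vector"
  assumes "f sums s" "g sums t" "\<And>n. norm (f n) \<le> g n"
  shows "norm s \<le> t"
proof (rule tendsto_le[OF _ assms(2)[unfolded sums_def] tendsto_norm[OF assms(1)[unfolded sums_def]]])
  show "\<forall>\<^sub>F n in sequentially. norm (sum f {..<n}) \<le> sum g {..<n}"
    by (intro always_eventually allI order_trans[OF norm_sum sum_mono[OF assms(3)]])
qed simp

lemma Cauchy_product_norm_gap_tendsto_0: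
  fixes a :: "nat \<Rightarrow> 'a::real_normed_vector" and b :: "nat \<Rightarrow> 'b::real_normed_vector"
  assumes na: "summable (\<lambda>k. norm (a k))" and nb: "summable (\<lambda>k. norm (b k))"
  shows "(\<lambda>n. \<Sum>(i, j)\<in>{..<n} \<times> {..<n} - {(i, j). i + j < n}. norm (a i) * norm (b j)) \<longlonglongrightarrow> 0"
proof -
  define f where "f = (\<lambda>(i, j). norm (a i) * norm (b j))"
  have "(\<lambda>n. (\<Sum>i<n. norm (a i)) * (\<Sum>j<n. norm (b j))) \<longlonglongrightarrow> (\<Sum>k. norm (a k)) * (\<Sum>k. norm (b k))"
    using na nb unfolding sums_def by (intro tendsto_mult summable_LIMSEQ)
  then have square: "(\<lambda>n. sum f ({..<n} \<times> {..<n})) \<longlonglongrightarrow> (\<Sum>k. norm (a k)) * (\<Sum>k. norm (b k))"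
    by (simp add: f_def sum_product sum.cartesian_product)
  have triangle: "(\<lambda>n. sum f {(i, j). i + j < n}) \<longlonglongrightarrow> (\<Sum>k. norm (a k)) * (\<Sum>k. norm (b k))"
    using Cauchy_product_sums[of "\<lambda>k. norm (a k)" "\<lambda>k. norm (b k)"] na nb
    by (simp add: sums_def f_def sum.triangle_reindex)
  have "sum f ({..<n} \<times> {..<n} - {(i, j). i + j < n})
      = sum f ({..<n} \<times> {..<n}) - sum f {(i, j). i + j < n}" for n
    by (intro sum_diff) auto
  with tendsto_diff[OF square triangle] show ?thesis
    by (simp add: f_def)
qed

text \<open>The library's \<open>Cauchy_product_sums\<close> for a bounded bilinear map instead of the
  multiplication of a Banach algebra.\<close>

lemma (in bounded_bilinear) Cauchy_product_sums:
  assumes a: "a sums A" and b: "b sums B"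
    and na: "summable (\<lambda>k. norm (a k))" and nb: "summable (\<lambda>k. norm (b k))"
  shows "(\<lambda>k. \<Sum>i\<le>k. prod (a i) (b (k - i))) sums (prod A B)"
proof -
  obtain KB where KB: "\<And>x y. norm (prod x y) \<le> KB * (norm x * norm y)"
    using nonneg_bounded by (metis mult.commute)
  define S1 where "S1 n = {..<n} \<times> {..<n}" for n :: nat
  define S2 where "S2 n = {(i, j). i + j < n}" for n :: nat
  define g where "g = (\<lambda>(i, j). prod (a i) (b j))"
  have "(\<lambda>n. prod (\<Sum>i<n. a i) (\<Sum>j<n. b j)) \<longlonglongrightarrow> prod A B"
    using a b unfolding sums_def by (rule tendsto)
  moreover have "prod (\<Sum>i<n. a i) (\<Sum>j<n. b j) = sum g (S1 n)" for n
    unfolding sum_left by (simp add: S1_def g_def sum_right sum.cartesian_product)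
  ultimately have square: "(\<lambda>n. sum g (S1 n)) \<longlonglongrightarrow> prod A B"
    by simp
  have gap_bound: "norm (sum g (S1 n) - sum g (S2 n))
      \<le> KB * (\<Sum>(i, j)\<in>S1 n - S2 n. norm (a i) * norm (b j))" for n
  proof -
    have "sum g (S1 n) - sum g (S2 n) = sum g (S1 n - S2 n)"
      by (rule sum_diff[symmetric]) (auto simp: S1_def S2_def)
    then show ?thesis
      by (simp add: sum_distrib_left split_def g_def KB order_trans[OF norm_sum sum_mono])
  qed
  have gap: "(\<lambda>n. KB * (\<Sum>(i, j)\<in>S1 n - S2 n. norm (a i) * norm (b j))) \<longlonglongrightarrow> 0"
    using Cauchy_product_norm_gap_tendsto_0[OF na nb] unfolding S1_def S2_def
    by (rule tendsto_mult_right_zero)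
  have "(\<lambda>n. sum g (S1 n) - sum g (S2 n)) \<longlonglongrightarrow> 0"
    by (rule Lim_null_comparison[OF always_eventually gap]) (use gap_bound in blast)
  from tendsto_diff[OF square this] have "(\<lambda>n. sum g (S2 n)) \<longlonglongrightarrow> prod A B"
    by simp
  then show ?thesis
    by (simp add: sums_def S2_def g_def sum.triangle_reindex)
qed

section \<open>Nonnegative operators\<close>

definition nonneg_op :: "('a::real_inner \<Rightarrow>\<^sub>L 'a) \<Rightarrow> bool" where
  "nonneg_op T \<longleftrightarrow> self_adjoint_op T \<and> (\<forall>x. 0 \<le> inner (T x) x)"

lemma self_adjoint_op_inner_commute:
  "self_adjoint_op T \<Longrightarrow> inner (T x) y = inner (T y) x"
  unfolding self_adjoint_op_def by (metis inner_commute)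

lemma quadratic_nonneg_imp_discriminant_le:
  fixes a b c :: real
  assumes quadratic: "\<And>s. 0 \<le> a + 2 * s * b + s\<^sup>2 * c" and "0 \<le> c"
  shows "b\<^sup>2 \<le> a * c"
proof (cases "c = 0")
  case True
  have "b = 0"
  proof (rule ccontr)
    assume "b \<noteq> 0"
    have "0 \<le> a + 2 * (- (a + 1) / (2 * b)) * b + (- (a + 1) / (2 * b))\<^sup>2 * c"
      by (rule quadratic)
    also have "\<dots> = -1"
      using \<open>b \<noteq> 0\<close> True by (simp add: field_simps)
    finally show False
      by simp
  qed
  with True show ?thesis
    by simp
next
  case False
  with \<open>0 \<le> c\<close> have "0 < c"
    by simp
  have "0 \<le> a + 2 * (- b / c) * b + (- b / c)\<^sup>2 * c"
    by (rule quadratic)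
  also have "\<dots> = (a * c - b\<^sup>2) / c"
    using \<open>0 < c\<close> by (simp add: field_simps power2_eq_square)
  finally show ?thesis
    using \<open>0 < c\<close> by (simp add: zero_le_divide_iff)
qed

lemma nonneg_op_Cauchy_Schwarz:
  assumes T: "nonneg_op T"
  shows "(inner (T x) y)\<^sup>2 \<le> inner (T x) x * inner (T y) y"
proof (rule quadratic_nonneg_imp_discriminant_le)
  fix s
  have "0 \<le> inner (T (x + s *\<^sub>R y)) (x + s *\<^sub>R y)"
    using T by (simp add: nonneg_op_def)
  also have "\<dots> = inner (T x) x + s * inner (T x) y + s * inner (T y) x + s\<^sup>2 * inner (T y) y"
    by (simp add: blinfun.add_right blinfun.scaleR_right
        inner_add_left inner_add_right power2_eq_square algebra_simps)
  also have "\<dots> = inner (T x) x + 2 * s * inner (T x) y + s\<^sup>2 * inner (T y) y"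
    using T by (simp add: nonneg_op_def self_adjoint_op_inner_commute[of T y x])
  finally show "0 \<le> inner (T x) x + 2 * s * inner (T x) y + s\<^sup>2 * inner (T y) y" .
  show "0 \<le> inner (T y) y"
    using T by (simp add: nonneg_op_def)
qed

lemma nonneg_op_form_eq_0:
  assumes "nonneg_op T" and "inner (T x) x = 0"
  shows "T x = 0"
  using nonneg_op_Cauchy_Schwarz[OF assms(1), of x "T x"] assms(2) by simp

lemma nonneg_op_norm_le:
  assumes T: "nonneg_op T" and "0 \<le> k" and form_le: "\<And>x. inner (T x) x \<le> k * (norm x)\<^sup>2"
  shows "norm T \<le> k"
proof (rule norm_blinfun_bound[OF \<open>0 \<le> k\<close>])
  fix x
  let ?y = "T x"
  have "(norm ?y)\<^sup>2 * (norm ?y)\<^sup>2 = (inner (T x) ?y)\<^sup>2"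
    by (simp add: dot_square_norm power2_eq_square)
  also have "\<dots> \<le> inner (T x) x * inner (T ?y) ?y"
    by (rule nonneg_op_Cauchy_Schwarz[OF T])
  also have "\<dots> \<le> (k * (norm x)\<^sup>2) * (k * (norm ?y)\<^sup>2)"
    using T \<open>0 \<le> k\<close> form_le by (intro mult_mono) (auto simp: nonneg_op_def)
  finally have "(norm ?y)\<^sup>2 * (norm ?y)\<^sup>2 \<le> (k * norm x)\<^sup>2 * (norm ?y)\<^sup>2"
    by (simp add: power_mult_distrib power2_eq_square algebra_simps)
  from mult_right_le_imp_le[OF this] have "(norm ?y)\<^sup>2 \<le> (k * norm x)\<^sup>2"
    by (cases "?y = 0") simp_all
  then show "norm ?y \<le> k * norm x"
    using \<open>0 \<le> k\<close> by (simp add: power2_le_iff_abs_le)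
qed

lemma nonneg_op_sqrt_unique:
  assumes R: "nonneg_op R" and R': "nonneg_op R'"
    and same_square: "R o\<^sub>L R = R' o\<^sub>L R'" and commute: "R' o\<^sub>L R = R o\<^sub>L R'"
  shows "R = R'"
proof (rule blinfun_eqI)
  fix x
  \<comment> \<open>\<open>(R + R') y = 0\<close>, so both nonnegative forms vanish at \<open>y\<close>.\<close>
  define y where "y = R x - R' x"
  have "R y + R' y = R (R x) - R' (R' x) + (R' (R x) - R (R' x))"
    by (simp add: y_def blinfun.diff_right)
  also have "\<dots> = 0"
    using same_square commute by (metis blinfun_apply_blinfun_compose diff_self add_0)
  finally have "inner (R y) y + inner (R' y) y = 0"
    by (simp add: inner_add_left[symmetric])
  moreover have "0 \<le> inner (R y) y" and "0 \<le> inner (R' y) y"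
    using R R' by (simp_all add: nonneg_op_def)
  ultimately have "R y = 0" and "R' y = 0"
    using nonneg_op_form_eq_0[OF R, of y] nonneg_op_form_eq_0[OF R', of y] by simp_all
  have "inner y y = inner x (R y) - inner x (R' y)"
    using R R' by (simp add: y_def inner_diff_left nonneg_op_def self_adjoint_op_def)
  also have "\<dots> = 0"
    using \<open>R y = 0\<close> \<open>R' y = 0\<close> by simp
  finally show "R x = R' x"
    by (simp add: y_def)
qed

section \<open>Square roots of positive definite operators\<close>

definition sqrt_coeff :: "nat \<Rightarrow> real" where
  "sqrt_coeff n = (-1) ^ n * ((1/2) gchoose n)"

lemma sums_sqrt_coeff: "\<bar>z\<bar> < 1 \<Longrightarrow> (\<lambda>n. sqrt_coeff n * z ^ n) sums sqrt (1 - z)"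
  using gen_binomial_real[of "-z" "1/2"]
  by (simp add: sqrt_coeff_def power_minus' powr_half_sqrt mult_ac)

lemma sqrt_coeff_Suc: "sqrt_coeff (Suc n) = sqrt_coeff n * ((real n - 1/2) / (real n + 1))"
  by (simp add: sqrt_coeff_def gbinomial_prod_rev prod.atLeast0_lessThan_Suc field_simps)

lemma sqrt_coeff_nonpos: "1 \<le> n \<Longrightarrow> sqrt_coeff n \<le> 0"
proof (induction n rule: dec_induct)
  case (step n)
  have "0 \<le> (real n - 1/2) / (real n + 1)"
    using step.hyps by simp
  with step.IH show ?case
    unfolding sqrt_coeff_Suc by (rule mult_nonpos_nonneg)
qed (simp add: sqrt_coeff_def)

lemma summable_abs_sqrt_coeff:
  assumes "0 \<le> k" "k < 1"
  shows "summable (\<lambda>n. \<bar>sqrt_coeff n\<bar> * k ^ n)"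
proof -
  have "summable (\<lambda>n. - (sqrt_coeff n * k ^ n))"
    using sums_sqrt_coeff[of k] assms by (intro summable_minus sums_summable) auto
  moreover have "\<forall>\<^sub>F n in sequentially. \<bar>sqrt_coeff n\<bar> * k ^ n = - (sqrt_coeff n * k ^ n)"
    using eventually_ge_at_top[of 1] by eventually_elim (simp add: sqrt_coeff_nonpos abs_of_nonpos)
  ultimately show ?thesis
    by (subst summable_cong) simp_all
qed

lemma sqrt_coeff_convolution:
  "(\<Sum>i\<le>n. sqrt_coeff i * sqrt_coeff (n - i)) = (if n = 0 then 1 else if n = 1 then -1 else 0)"
proof -
  have "(\<Sum>i\<le>n. sqrt_coeff i * sqrt_coeff (n - i))
      = (-1) ^ n * (\<Sum>i\<le>n. ((1/2::real) gchoose i) * ((1/2) gchoose (n - i)))"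
  proof (subst sum_distrib_left, rule sum.cong)
    fix i
    assume "i \<in> {..n}"
    then have "(-1::real) ^ i * (-1) ^ (n - i) = (-1) ^ n"
      by (simp add: power_add[symmetric])
    then show "sqrt_coeff i * sqrt_coeff (n - i) = (-1) ^ n * (((1/2) gchoose i) * ((1/2) gchoose (n - i)))"
      by (simp add: sqrt_coeff_def algebra_simps)
  qed simp
  also have "\<dots> = (-1) ^ n * (1 gchoose n)"
    using gbinomial_Vandermonde[of "1/2::real" "1/2" n] by (simp add: atMost_atLeast0)
  also have "\<dots> = (if n = 0 then 1 else if n = 1 then -1 else 0)"
    using binomial_gbinomial[of 1 n, where 'a=real] by (cases n) (auto simp: binomial_eq_0)
  finally show ?thesis .
qed

lemma funpow_commute_apply: "(\<And>x. g (f x) = f (g x)) \<Longrightarrow> g ((f ^^ n) x) = (f ^^ n) (g x)"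
  by (induction n) simp_all

lemma bounded_linear_funpow:
  fixes f :: "'a::real_normed_vector \<Rightarrow> 'a"
  shows "bounded_linear f \<Longrightarrow> bounded_linear (f ^^ n)"
  by (induction n) (simp_all add: id_def o_def bounded_linear_ident bounded_linear_compose)

lemma norm_funpow_le:
  fixes f :: "'a::real_normed_vector \<Rightarrow> 'a"
  assumes "\<And>x. norm (f x) \<le> k * norm x" and "0 \<le> k"
  shows "norm ((f ^^ n) x) \<le> k ^ n * norm x"
proof (induction n)
  case (Suc n)
  have "norm ((f ^^ Suc n) x) \<le> k * norm ((f ^^ n) x)"
    using assms(1)[of "(f ^^ n) x"] by simp
  also have "\<dots> \<le> k ^ Suc n * norm x"
    using mult_left_mono[OF Suc.IH \<open>0 \<le> k\<close>] by (simp add: mult.assoc)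
  finally show ?case .
qed simp

lemma self_adjoint_op_funpow_inner:
  assumes "self_adjoint_op K"
  shows "inner ((blinfun_apply K ^^ n) x) y = inner x ((blinfun_apply K ^^ n) y)"
proof (induction n arbitrary: y)
  case (Suc n)
  have "inner ((blinfun_apply K ^^ Suc n) x) y = inner ((blinfun_apply K ^^ n) x) (K y)"
    using assms by (simp add: self_adjoint_op_def)
  also have "\<dots> = inner x ((blinfun_apply K ^^ Suc n) y)"
    by (simp only: Suc.IH funpow_swap1 funpow.simps comp_apply)
  finally show ?case .
qed simp

lemma norm_blinfun_funpow_le:
  fixes K :: "'a::real_normed_vector \<Rightarrow>\<^sub>L 'a"
  shows "norm ((blinfun_apply K ^^ n) x) \<le> norm K ^ n * norm x"
  by (rule norm_funpow_le[OF _ norm_ge_zero]) (metis norm_blinfun mult.commute)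

text \<open>The binomial series of \<open>(I - K)\<^sup>1\<^sup>/\<^sup>2\<close>. It converges for \<open>norm K < 1\<close>; otherwise
  \<open>suminf\<close> returns an unspecified value.\<close>

definition sqrt_id_minus :: "('a::real_normed_vector \<Rightarrow>\<^sub>L 'a) \<Rightarrow> 'a \<Rightarrow> 'a" where
  "sqrt_id_minus K x = (\<Sum>n. sqrt_coeff n *\<^sub>R (blinfun_apply K ^^ n) x)"

context
  fixes K :: "'a::{real_inner, complete_space} \<Rightarrow>\<^sub>L 'a"
  assumes K_self_adjoint: "self_adjoint_op K" and K_norm: "norm K < 1"
begin

lemma norm_sqrt_id_minus_term_le:
  "norm (sqrt_coeff n *\<^sub>R (blinfun_apply K ^^ n) x) \<le> \<bar>sqrt_coeff n\<bar> * norm K ^ n * norm x"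
  using norm_blinfun_funpow_le[where K = K and n = n and x = x] by (simp add: mult.assoc mult_left_mono)

lemma summable_norm_sqrt_id_minus_terms:
  "summable (\<lambda>n. norm (sqrt_coeff n *\<^sub>R (blinfun_apply K ^^ n) x))"
proof (rule summable_comparison_test')
  show "summable (\<lambda>n. \<bar>sqrt_coeff n\<bar> * norm K ^ n * norm x)"
    using summable_abs_sqrt_coeff[OF norm_ge_zero K_norm] by (rule summable_mult2)
qed (simp only: real_norm_def abs_norm_cancel norm_sqrt_id_minus_term_le)

lemma sqrt_id_minus_sums: "(\<lambda>n. sqrt_coeff n *\<^sub>R (blinfun_apply K ^^ n) x) sums sqrt_id_minus K x"
  unfolding sqrt_id_minus_def
  by (rule summable_sums[OF summable_norm_cancel_complete[OF summable_norm_sqrt_id_minus_terms]])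

lemma bounded_linear_sqrt_id_minus: "bounded_linear (sqrt_id_minus K)"
proof (rule bounded_linear_intro)
  have K_power: "bounded_linear (blinfun_apply K ^^ n)" for n
    by (rule bounded_linear_funpow[OF blinfun.bounded_linear_right])
  fix x y :: 'a and r :: real
  have "(\<lambda>n. sqrt_coeff n *\<^sub>R (blinfun_apply K ^^ n) (x + y)) sums (sqrt_id_minus K x + sqrt_id_minus K y)"
    using sums_add[OF sqrt_id_minus_sums[of x] sqrt_id_minus_sums[of y]]
    by (simp add: linear_simps(1)[OF K_power] scaleR_add_right)
  then show "sqrt_id_minus K (x + y) = sqrt_id_minus K x + sqrt_id_minus K y"
    using sqrt_id_minus_sums sums_unique2 by blast
  have "(\<lambda>n. sqrt_coeff n *\<^sub>R (blinfun_apply K ^^ n) (r *\<^sub>R x)) sums (r *\<^sub>R sqrt_id_minus K x)"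
    using sums_scaleR_right[OF sqrt_id_minus_sums[of x], of r]
    by (simp add: linear_simps(5)[OF K_power] mult.commute)
  then show "sqrt_id_minus K (r *\<^sub>R x) = r *\<^sub>R sqrt_id_minus K x"
    using sqrt_id_minus_sums sums_unique2 by blast
  have "(\<lambda>n. \<bar>sqrt_coeff n\<bar> * norm K ^ n * norm x) sums ((\<Sum>n. \<bar>sqrt_coeff n\<bar> * norm K ^ n) * norm x)"
    using summable_abs_sqrt_coeff[OF norm_ge_zero K_norm] by (intro sums_mult2 summable_sums)
  from sums_norm_le[OF sqrt_id_minus_sums this norm_sqrt_id_minus_term_le]
  show "norm (sqrt_id_minus K x) \<le> norm x * (\<Sum>n. \<bar>sqrt_coeff n\<bar> * norm K ^ n)"
    by (simp add: mult.commute)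
qed

lemma sqrt_id_minus_inner_sums:
  "(\<lambda>n. sqrt_coeff n * inner ((blinfun_apply K ^^ n) x) y) sums inner (sqrt_id_minus K x) y"
  using bounded_linear.sums[OF bounded_linear_inner_left sqrt_id_minus_sums[of x], of y] by simp

lemma sqrt_id_minus_self_adjoint: "inner (sqrt_id_minus K x) y = inner x (sqrt_id_minus K y)"
proof -
  have "inner ((blinfun_apply K ^^ n) y) x = inner ((blinfun_apply K ^^ n) x) y" for n
    by (subst inner_commute) (rule self_adjoint_op_funpow_inner[OF K_self_adjoint, symmetric])
  then have "(\<lambda>n. sqrt_coeff n * inner ((blinfun_apply K ^^ n) x) y) sums inner x (sqrt_id_minus K y)"
    using sqrt_id_minus_inner_sums[of y x] by (simp add: inner_commute[of _ x])
  then show ?thesis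
    using sqrt_id_minus_inner_sums sums_unique2 by blast
qed

lemma sqrt_id_minus_nonneg: "0 \<le> inner (sqrt_id_minus K x) x"
proof -
  have "sqrt_coeff n * norm K ^ n * (norm x)\<^sup>2 \<le> sqrt_coeff n * inner ((blinfun_apply K ^^ n) x) x" for n
  proof (cases "n = 0")
    case False
    have "inner ((blinfun_apply K ^^ n) x) x \<le> norm ((blinfun_apply K ^^ n) x) * norm x"
      by (rule norm_cauchy_schwarz)
    also have "\<dots> \<le> norm K ^ n * (norm x)\<^sup>2"
      using mult_right_mono[OF norm_blinfun_funpow_le norm_ge_zero] by (simp add: power2_eq_square mult.assoc)
    finally have "inner ((blinfun_apply K ^^ n) x) x \<le> norm K ^ n * (norm x)\<^sup>2" .
    from mult_left_mono_neg[OF this sqrt_coeff_nonpos] False show ?thesis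
      by (simp add: mult.assoc)
  qed (simp add: dot_square_norm)
  moreover have "(\<lambda>n. sqrt_coeff n * norm K ^ n * (norm x)\<^sup>2) sums (sqrt (1 - norm K) * (norm x)\<^sup>2)"
    using K_norm by (intro sums_mult2 sums_sqrt_coeff) simp
  ultimately have "sqrt (1 - norm K) * (norm x)\<^sup>2 \<le> inner (sqrt_id_minus K x) x"
    by (rule sums_le[OF _ _ sqrt_id_minus_inner_sums])
  moreover have "0 \<le> sqrt (1 - norm K) * (norm x)\<^sup>2"
    using K_norm by simp
  ultimately show ?thesis
    by linarith
qed

lemma sqrt_id_minus_Cauchy_product_term:
  fixes x y :: 'a
  defines "Kn \<equiv> \<lambda>n. blinfun_apply K ^^ n"
  shows "(\<Sum>i\<le>n. inner (sqrt_coeff i *\<^sub>R Kn i x) (sqrt_coeff (n - i) *\<^sub>R Kn (n - i) y))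
      = (if n = 0 then inner x y else if n = 1 then - inner (K x) y else 0)"
proof -
  have swap: "inner (Kn i x) (Kn (n - i) y) = inner (Kn n x) y" if "i \<le> n" for i
  proof -
    have "inner (Kn i x) (Kn (n - i) y) = inner (Kn (n - i) (Kn i x)) y"
      unfolding Kn_def by (rule self_adjoint_op_funpow_inner[OF K_self_adjoint, symmetric])
    also have "Kn (n - i) (Kn i x) = Kn n x"
      using that funpow_add[of "n - i" i "blinfun_apply K"] by (simp add: Kn_def)
    finally show ?thesis .
  qed
  have "(\<Sum>i\<le>n. inner (sqrt_coeff i *\<^sub>R Kn i x) (sqrt_coeff (n - i) *\<^sub>R Kn (n - i) y))
      = (\<Sum>i\<le>n. sqrt_coeff i * sqrt_coeff (n - i) * inner (Kn n x) y)"
    by (rule sum.cong) (simp_all add: swap)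
  also have "\<dots> = (\<Sum>i\<le>n. sqrt_coeff i * sqrt_coeff (n - i)) * inner (Kn n x) y"
    by (rule sum_distrib_right[symmetric])
  finally show ?thesis
    by (simp add: sqrt_coeff_convolution Kn_def)
qed

lemma sqrt_id_minus_square: "sqrt_id_minus K (sqrt_id_minus K x) = x - K x"
proof -
  let ?P = "sqrt_id_minus K" and ?Kn = "\<lambda>n. blinfun_apply K ^^ n"
  have "inner (?P (?P x)) y = inner (x - K x) y" for y
  proof -
    have "(\<lambda>n. \<Sum>i\<le>n. inner (sqrt_coeff i *\<^sub>R ?Kn i x) (sqrt_coeff (n - i) *\<^sub>R ?Kn (n - i) y))
        sums inner (?P x) (?P y)"
      by (rule bounded_bilinear.Cauchy_product_sums[OF bounded_bilinear_inner sqrt_id_minus_sums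
            sqrt_id_minus_sums summable_norm_sqrt_id_minus_terms summable_norm_sqrt_id_minus_terms])
    moreover note sqrt_id_minus_Cauchy_product_term
    ultimately have "(\<lambda>n. if n = 0 then inner x y else if n = 1 then - inner (K x) y else 0)
        sums inner (?P x) (?P y)"
      by simp
    moreover have "(\<lambda>n. if n = 0 then inner x y else if n = 1 then - inner (K x) y else 0)
        sums inner (x - K x) y"
      using sums_finite[of "{0, 1}" "\<lambda>n. if n = 0 then inner x y else if n = 1 then - inner (K x) y else 0"]
      by (simp add: inner_diff_left)
    ultimately have "inner (?P x) (?P y) = inner (x - K x) y"
      by (rule sums_unique2)
    then show ?thesis
      by (simp add: sqrt_id_minus_self_adjoint)
  qed
  then have "inner (?P (?P x) - (x - K x)) (?P (?P x) - (x - K x)) = 0"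
    by (simp add: inner_diff_left)
  then show ?thesis
    by simp
qed

lemma sqrt_id_minus_commute:
  fixes T :: "'a \<Rightarrow>\<^sub>L 'a"
  assumes "\<And>x. T (K x) = K (T x)"
  shows "T (sqrt_id_minus K x) = sqrt_id_minus K (T x)"
proof -
  have "(\<lambda>n. T (sqrt_coeff n *\<^sub>R (blinfun_apply K ^^ n) x)) sums T (sqrt_id_minus K x)"
    by (rule bounded_linear.sums[OF blinfun.bounded_linear_right sqrt_id_minus_sums])
  then have "(\<lambda>n. sqrt_coeff n *\<^sub>R (blinfun_apply K ^^ n) (T x)) sums T (sqrt_id_minus K x)"
    by (simp add: blinfun.scaleR_right funpow_commute_apply[of "blinfun_apply T" "blinfun_apply K", OF assms])
  then show ?thesis
    using sqrt_id_minus_sums sums_unique2 by blast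
qed

end

lemma inner_blinfun_le_norm:
  fixes T :: "'a::real_inner \<Rightarrow>\<^sub>L 'a"
  shows "inner (T x) x \<le> norm T * (norm x)\<^sup>2"
proof -
  have "inner (T x) x \<le> norm (T x) * norm x"
    by (rule norm_cauchy_schwarz)
  also have "\<dots> \<le> norm T * norm x * norm x"
    by (simp add: norm_blinfun mult_right_mono)
  finally show ?thesis
    by (simp add: power2_eq_square mult.assoc)
qed

lemma pos_def_op_id_minus_scaled_contraction:
  fixes Q :: "'a::real_inner \<Rightarrow>\<^sub>L 'a"
  assumes "pos_def_op Q"
  obtains c where "0 < c" and "self_adjoint_op (id_blinfun - (1 / c) *\<^sub>R Q)"
    and "norm (id_blinfun - (1 / c) *\<^sub>R Q) < 1"
proof -
  obtain \<theta> where "0 < \<theta>" and Q_ge: "\<And>x. \<theta> * (norm x)\<^sup>2 \<le> inner (Q x) x"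
    and Q_self_adjoint: "self_adjoint_op Q"
    using assms unfolding pos_def_op_def by blast
  define c where "c = norm Q + 1"
  have "0 < c"
    by (simp add: c_def add_nonneg_pos)
  define K where "K = id_blinfun - (1 / c) *\<^sub>R Q"
  have K_apply: "K x = x - (1 / c) *\<^sub>R Q x" for x
    by (simp add: K_def blinfun.diff_left blinfun.scaleR_left)
  have K_form: "inner (K x) x = (norm x)\<^sup>2 - inner (Q x) x / c" for x
    by (simp add: K_apply inner_diff_left dot_square_norm)
  have Q_le: "inner (Q x) x \<le> c * (norm x)\<^sup>2" for x
    using inner_blinfun_le_norm[of Q x] zero_le_power2[of "norm x"]
    unfolding c_def distrib_right by linarith
  have K_nonneg: "nonneg_op K"
    unfolding nonneg_op_def
  proof
    show "self_adjoint_op K"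
      using Q_self_adjoint by (simp add: self_adjoint_op_def K_apply inner_diff_left inner_diff_right)
    show "\<forall>x. 0 \<le> inner (K x) x"
      using Q_le \<open>0 < c\<close> by (simp add: K_form divide_le_eq mult.commute)
  qed
  define k where "k = max 0 (1 - \<theta> / c)"
  have "inner (K x) x \<le> k * (norm x)\<^sup>2" for x
  proof -
    have "inner (K x) x \<le> (1 - \<theta> / c) * (norm x)\<^sup>2"
      using divide_right_mono[OF Q_ge[of x], of c] \<open>0 < c\<close> by (simp add: K_form algebra_simps)
    also have "\<dots> \<le> k * (norm x)\<^sup>2"
      by (simp add: k_def mult_right_mono)
    finally show ?thesis .
  qed
  then have "norm K \<le> k"
    by (intro nonneg_op_norm_le[OF K_nonneg]) (simp_all add: k_def)
  also have "k < 1"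
    using \<open>0 < \<theta>\<close> \<open>0 < c\<close> by (simp add: k_def)
  finally show thesis
    using \<open>0 < c\<close> K_nonneg by (intro that[of c]) (simp_all add: K_def nonneg_op_def)
qed

lemma pos_def_op_sqrt_exists:
  fixes Q :: "'a::{real_inner, complete_space} \<Rightarrow>\<^sub>L 'a"
  assumes "pos_def_op Q"
  obtains R where "nonneg_op R" and "R o\<^sub>L R = Q"
    and "\<And>T. T o\<^sub>L Q = Q o\<^sub>L T \<Longrightarrow> T o\<^sub>L R = R o\<^sub>L T"
proof -
  obtain c where "0 < c" and K: "self_adjoint_op (id_blinfun - (1 / c) *\<^sub>R Q)"
    "norm (id_blinfun - (1 / c) *\<^sub>R Q) < 1"
    using pos_def_op_id_minus_scaled_contraction[OF assms] by blast
  define K where "K = id_blinfun - (1 / c) *\<^sub>R Q"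
  have K_apply: "K x = x - (1 / c) *\<^sub>R Q x" for x
    by (simp add: K_def blinfun.diff_left blinfun.scaleR_left)
  note sqrt_K = bounded_linear_sqrt_id_minus sqrt_id_minus_self_adjoint sqrt_id_minus_nonneg
    sqrt_id_minus_square sqrt_id_minus_commute
  note sqrt_K = sqrt_K[OF K[folded K_def]]
  define R where "R = sqrt c *\<^sub>R Blinfun (sqrt_id_minus K)"
  have R_apply: "R x = sqrt c *\<^sub>R sqrt_id_minus K x" for x
    by (simp add: R_def blinfun.scaleR_left bounded_linear_Blinfun_apply[OF sqrt_K(1)])
  show thesis
  proof (rule that)
    show "nonneg_op R"
      using \<open>0 < c\<close> sqrt_K(2,3) by (simp add: nonneg_op_def self_adjoint_op_def R_apply)
    show "R o\<^sub>L R = Q"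
      using \<open>0 < c\<close> by (intro blinfun_eqI) (simp add: R_apply blinfun.scaleR_right sqrt_K(4) K_apply)
    fix T
    assume TQ: "T o\<^sub>L Q = Q o\<^sub>L T"
    have "T (Q x) = Q (T x)" for x
      by (metis TQ blinfun_apply_blinfun_compose)
    then have "T (K x) = K (T x)" for x
      by (simp add: K_apply blinfun.diff_right blinfun.scaleR_right)
    then show "T o\<^sub>L R = R o\<^sub>L T"
      by (intro blinfun_eqI) (simp add: R_apply blinfun.scaleR_right sqrt_K(5))
  qed
qed

lemma pos_def_op_ex1_sqrt:
  fixes Q :: "'a::{real_inner, complete_space} \<Rightarrow>\<^sub>L 'a"
  assumes "pos_def_op Q"
  shows "\<exists>!R. self_adjoint_op R \<and> (\<forall>x. inner (R x) x \<ge> 0) \<and> R o\<^sub>L R = Q"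
proof -
  obtain R where R: "nonneg_op R" "R o\<^sub>L R = Q"
    and commutes: "\<And>T. T o\<^sub>L Q = Q o\<^sub>L T \<Longrightarrow> T o\<^sub>L R = R o\<^sub>L T"
    using pos_def_op_sqrt_exists[OF assms] by blast
  show ?thesis
  proof (rule ex1I)
    show "self_adjoint_op R \<and> (\<forall>x. inner (R x) x \<ge> 0) \<and> R o\<^sub>L R = Q"
      using R by (simp add: nonneg_op_def)
    fix R'
    assume "self_adjoint_op R' \<and> (\<forall>x. inner (R' x) x \<ge> 0) \<and> R' o\<^sub>L R' = Q"
    then have R': "nonneg_op R'" "R' o\<^sub>L R' = Q"
      by (simp_all add: nonneg_op_def)
    have "R' o\<^sub>L Q = Q o\<^sub>L R'"
      by (rule blinfun_eqI) (simp flip: R'(2))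
    then have "R' o\<^sub>L R = R o\<^sub>L R'"
      by (rule commutes)
    then show "R' = R"
      using nonneg_op_sqrt_unique[OF R'(1) R(1)] R(2) R'(2) by simp
  qed
qed

lemma op_sqrt_square:
  fixes Q :: "'a::{real_inner, complete_space} \<Rightarrow>\<^sub>L 'a"
  shows "pos_def_op Q \<Longrightarrow> op_sqrt Q o\<^sub>L op_sqrt Q = Q"
  using theI'[OF pos_def_op_ex1_sqrt] unfolding op_sqrt_def by blast

lemma op_sqrt_apply_nonzero:
  fixes Q :: "'a::{real_inner, complete_space} \<Rightarrow>\<^sub>L 'a"
  assumes Q: "pos_def_op Q" and "x \<noteq> 0"
  shows "op_sqrt Q x \<noteq> 0"
proof
  assume "op_sqrt Q x = 0"
  then have "Q x = 0"
    using op_sqrt_square[OF Q] by (metis blinfun_apply_blinfun_compose blinfun.zero_right)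
  moreover obtain \<theta> where "0 < \<theta>" "\<theta> * (norm x)\<^sup>2 \<le> inner (Q x) x"
    using Q unfolding pos_def_op_def by blast
  ultimately show False
    using \<open>x \<noteq> 0\<close> by (simp add: mult_le_0_iff)
qed

section \<open>Orthonormal bases and the Hilbert-Schmidt norm\<close>

definition orthonormal :: "'a::real_inner set \<Rightarrow> bool" where
  "orthonormal B \<longleftrightarrow> pairwise orthogonal B \<and> (\<forall>e\<in>B. norm e = 1)"

lemma orthonormal_basis_iff: "orthonormal_basis B \<longleftrightarrow> orthonormal B \<and> closure (span B) = UNIV"
  by (auto simp: orthonormal_basis_def orthonormal_def pairwise_def orthogonal_def)

lemma orthonormal_residual_orthogonal:
  assumes "finite G" and G: "orthonormal G" and "e \<in> G"
  shows "orthogonal (v - (\<Sum>b\<in>G. inner b v *\<^sub>R b)) e"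
proof -
  have "inner e (\<Sum>b\<in>G. inner b v *\<^sub>R b) = (\<Sum>b\<in>G. if b = e then inner e v else 0)"
    unfolding inner_sum_right
  proof (rule sum.cong)
    fix b
    assume "b \<in> G"
    then show "inner e (inner b v *\<^sub>R b) = (if b = e then inner e v else 0)"
      using G \<open>e \<in> G\<close> by (auto simp: orthonormal_def pairwise_def orthogonal_def dot_square_norm)
  qed simp
  also have "\<dots> = inner e v"
    using \<open>finite G\<close> \<open>e \<in> G\<close> by simp
  finally show ?thesis
    by (subst orthogonal_commute) (simp add: orthogonal_def inner_diff_right)
qed

lemma span_insert_scaleR:
  assumes "c \<noteq> 0"
  shows "span (insert (c *\<^sub>R x) S) = span (insert x S)"
proof -
  have "x = inverse c *\<^sub>R (c *\<^sub>R x)"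
    using assms by simp
  also have "\<dots> \<in> span (insert (c *\<^sub>R x) S)"
    by (intro span_scale span_base) simp
  finally have "span (insert (c *\<^sub>R x) S) = span (insert x (insert (c *\<^sub>R x) S))"
    by (simp add: span_redundant)
  also have "\<dots> = span (insert x S)"
    using span_redundant[of "c *\<^sub>R x" "insert x S"] by (simp add: insert_commute span_base span_scale)
  finally show ?thesis .
qed

lemma orthonormal_extend:
  fixes v :: "'a::real_inner"
  assumes "finite G" and G: "orthonormal G"
  obtains G' where "finite G'" "orthonormal G'" "G \<subseteq> G'" "span G' = span (insert v G)"
proof -
  define r where "r = v - (\<Sum>b\<in>G. inner b v *\<^sub>R b)"
  have span_r: "span (insert r G) = span (insert v G)"
    by (rule eq_span_insert_eq) (simp add: r_def span_neg span_sum span_scale span_base)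
  show thesis
  proof (cases "r = 0")
    case True
    with span_r show thesis
      by (intro that[of G]) (simp_all add: \<open>finite G\<close> G)
  next
    case False
    have "orthonormal (insert (r /\<^sub>R norm r) G)"
      using G orthonormal_residual_orthogonal[OF \<open>finite G\<close> G] False
      by (auto simp: orthonormal_def r_def orthogonal_clauses intro!: pairwise_orthogonal_insert)
    moreover have "span (insert (r /\<^sub>R norm r) G) = span (insert v G)"
      using False span_r by (simp add: span_insert_scaleR)
    ultimately show thesis
      using \<open>finite G\<close> by (intro that[of "insert (r /\<^sub>R norm r) G"]) auto
  qed
qed

lemma orthonormal_chain_exists:
  fixes d :: "nat \<Rightarrow> 'a::real_inner"
  obtains G :: "nat \<Rightarrow> 'a set"
  where "\<And>n. finite (G n)" "\<And>n. orthonormal (G n)" "\<And>n. span (G n) = span (d ` {..<n})"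
    "\<And>n. G n \<subseteq> G (Suc n)"
proof -
  define P where "P n G \<longleftrightarrow> finite G \<and> orthonormal G \<and> span G = span (d ` {..<n})"
    for n and G :: "'a set"
  have step: "\<exists>G'. P (Suc n) G' \<and> G \<subseteq> G'" if "P n G" for n G
  proof -
    from that have "finite G" "orthonormal G"
      by (simp_all add: P_def)
    then obtain G' where "finite G'" "orthonormal G'" "G \<subseteq> G'" "span G' = span (insert (d n) G)"
      by (rule orthonormal_extend)
    moreover have "span (insert (d n) G) = span (d ` {..<Suc n})"
      using that by (simp add: P_def lessThan_Suc span_insert)
    ultimately show ?thesis
      by (auto simp: P_def)
  qed
  have "P 0 {}"
    by (simp add: P_def orthonormal_def)
  then obtain G where "\<forall>n. P n (G n) \<and> G n \<subseteq> G (Suc n)"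
    using dependent_nat_choice[of P "\<lambda>_ G G'. G \<subseteq> G'", OF _ step] by blast
  then show thesis
    by (intro that[of G]) (simp_all add: P_def)
qed

lemma orthonormal_UN_chain:
  assumes "\<And>n. orthonormal (G n)" and "\<And>n. G n \<subseteq> G (Suc n)"
  shows "orthonormal (\<Union>n. G n)"
  unfolding orthonormal_def pairwise_def
proof (intro conjI ballI impI)
  fix e f
  assume "e \<in> (\<Union>n. G n)" "f \<in> (\<Union>n. G n)" "e \<noteq> f"
  then obtain m n where "e \<in> G m" "f \<in> G n"
    by auto
  then have "e \<in> G (max m n)" "f \<in> G (max m n)"
    using lift_Suc_mono_le[of G, OF assms(2)] by (meson max.cobounded1 max.cobounded2 subsetD)+
  then show "orthogonal e f"
    using assms(1)[of "max m n"] \<open>e \<noteq> f\<close> by (auto simp: orthonormal_def pairwise_def)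
next
  fix e
  assume "e \<in> (\<Union>n. G n)"
  then show "norm e = 1"
    using assms(1) by (auto simp: orthonormal_def)
qed

lemma orthonormal_basis_exists_dense_range:
  fixes d :: "nat \<Rightarrow> 'a::real_inner"
  assumes dense: "closure (range d) = UNIV"
  shows "\<exists>B::'a set. orthonormal_basis B"
proof -
  obtain G :: "nat \<Rightarrow> 'a set" where G: "\<And>n. orthonormal (G n)" "\<And>n. G n \<subseteq> G (Suc n)"
    and G_span: "\<And>n. span (G n) = span (d ` {..<n})"
    by (rule orthonormal_chain_exists[of d]) blast
  from G have "orthonormal (\<Union>n. G n)"
    by (rule orthonormal_UN_chain)
  moreover have "range d \<subseteq> span (\<Union>n. G n)"
  proof (rule image_subsetI)
    fix n
    have "d n \<in> span (d ` {..<Suc n})"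
      by (intro span_base) auto
    also have "\<dots> = span (G (Suc n))"
      by (rule G_span[symmetric])
    also have "\<dots> \<subseteq> span (\<Union>n. G n)"
      by (intro span_mono) auto
    finally show "d n \<in> span (\<Union>n. G n)" .
  qed
  then have "closure (span (\<Union>n. G n)) = UNIV"
    using closure_mono[of "range d"] dense by auto
  ultimately show ?thesis
    unfolding orthonormal_basis_iff by blast
qed

lemma separable_orthonormal_basis_exists:
  assumes "separable_space (euclidean :: 'a::real_inner topology)"
  shows "\<exists>B::'a set. orthonormal_basis B"
proof -
  obtain C :: "'a set" where "countable C" and "closure C = UNIV"
    using assms by (auto simp: separable_space_def)
  then have "range (from_nat_into C) = C"
    by (intro range_from_nat_into) auto
  with \<open>closure C = UNIV\<close> show ?thesis
    by (intro orthonormal_basis_exists_dense_range[of "from_nat_into C"]) simp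
qed

lemma orthonormal_basis_nonempty:
  fixes B :: "'a::real_inner set"
  assumes "orthonormal_basis B" and "\<exists>x::'a. x \<noteq> 0"
  shows "B \<noteq> {}"
proof
  assume "B = {}"
  with assms(1) have "{0} = (UNIV :: 'a set)"
    by (simp add: orthonormal_basis_def)
  with assms(2) show False
    by (metis UNIV_I singletonD)
qed

lemma some_orthonormal_basis_unit_vector:
  assumes "separable_space (euclidean :: 'a::real_inner topology)" and "\<exists>x::'a. x \<noteq> 0"
  obtains e :: "'a::real_inner" where "e \<in> (SOME B. orthonormal_basis B)" and "norm e = 1"
proof -
  have "orthonormal_basis (SOME B::'a set. orthonormal_basis B)"
    using separable_orthonormal_basis_exists[OF assms(1)] by (rule someI_ex)
  with orthonormal_basis_nonempty[OF _ assms(2)] show thesis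
    by (metis equals0I orthonormal_basis_def that)
qed

lemma hs_norm_sq_ge_basis_vector:
  fixes T :: "'a::real_inner \<Rightarrow>\<^sub>L 'a"
  assumes "e \<in> (SOME B::'a set. orthonormal_basis B)"
  shows "ennreal ((norm (T e))\<^sup>2) \<le> hs_norm_sq T"
proof -
  let ?B = "SOME B::'a set. orthonormal_basis B"
  let ?f = "\<lambda>e. ennreal ((norm (T e))\<^sup>2)"
  have "sum ?f {e} \<le> (SUP F\<in>{F. finite F \<and> F \<subseteq> ?B}. sum ?f F)"
    by (rule SUP_upper) (use assms in auto)
  also have "\<dots> = infsum ?f ?B"
    by (rule nonneg_infsum_complete[symmetric]) simp
  finally show ?thesis
    by (simp add: hs_norm_sq_def)
qed

section \<open>Divergence of the integral at zero\<close>

lemma inverse_le_powr_square: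
  fixes t \<gamma> :: real
  assumes "0 < t" "t \<le> 1" "\<gamma> \<le> 1/2"
  shows "1 / t \<le> (t powr (\<gamma> - 1))\<^sup>2"
proof -
  have "t powr (-1) \<le> t powr (2 * (\<gamma> - 1))"
    using assms by (intro powr_mono') auto
  moreover have "(t powr (\<gamma> - 1))\<^sup>2 = t powr (2 * (\<gamma> - 1))"
    using assms(1) powr_power[of t "\<gamma> - 1" 2] by (simp add: mult.commute)
  ultimately show ?thesis
    using assms(1) by (simp add: powr_minus_divide)
qed

lemma hs_norm_sq_powr_scaleR_ge:
  fixes T :: "'a::real_inner \<Rightarrow>\<^sub>L 'a" and t \<gamma> m :: real
  assumes "e \<in> (SOME B::'a set. orthonormal_basis B)" and "0 < t" "t \<le> 1" "\<gamma> \<le> 1/2"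
    and "m \<le> (norm (T e))\<^sup>2"
  shows "ennreal (m / t) \<le> hs_norm_sq ((t powr (\<gamma> - 1)) *\<^sub>R T)"
proof -
  have "m / t \<le> (1 / t) * (norm (T e))\<^sup>2"
    using divide_right_mono[OF assms(5), of t] \<open>0 < t\<close> by simp
  also have "\<dots> \<le> (t powr (\<gamma> - 1))\<^sup>2 * (norm (T e))\<^sup>2"
    using inverse_le_powr_square[OF assms(2-4)] by (rule mult_right_mono) simp
  also have "\<dots> = (norm (((t powr (\<gamma> - 1)) *\<^sub>R T) e))\<^sup>2"
    by (simp add: blinfun.scaleR_left power_mult_distrib)
  finally show ?thesis
    using hs_norm_sq_ge_basis_vector[OF assms(1)] ennreal_leI order_trans by blast
qed

lemma c0_semigroup_norm_bound_near_0:
  assumes "c0_semigroup S" and "v \<noteq> 0"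
  obtains \<delta> where "0 < \<delta>" "\<delta> \<le> 1"
    "\<And>t. 0 < t \<Longrightarrow> t \<le> \<delta> \<Longrightarrow> (norm v)\<^sup>2 / 4 \<le> (norm (S t v))\<^sup>2"
proof -
  have "((\<lambda>t. norm (S t v)) \<longlongrightarrow> norm v) (at_right 0)"
    using assms(1) by (intro tendsto_norm) (simp add: c0_semigroup_def)
  moreover have "norm v / 2 < norm v"
    using assms(2) by simp
  ultimately have "\<forall>\<^sub>F t in at_right 0. norm v / 2 < norm (S t v)"
    by (rule order_tendstoD)
  then obtain b where "0 < b" and b: "\<And>t. 0 < t \<Longrightarrow> t < b \<Longrightarrow> norm v / 2 < norm (S t v)"
    by (auto simp: eventually_at_right_field)
  have "(norm v)\<^sup>2 / 4 \<le> (norm (S t v))\<^sup>2" if "0 < t" "t < b" for t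
    using power_mono[OF less_imp_le[OF b[OF that]], of 2] by (simp add: power_divide)
  then show thesis
    by (intro that[of "min (b / 2) 1"]) (use \<open>0 < b\<close> in auto)
qed

lemma nn_integral_inverse_interval:
  fixes a b m :: real
  assumes "0 < a" "a \<le> b" "0 \<le> m"
  shows "(\<integral>\<^sup>+ t. ennreal (indicator {a..b} t * (m / t)) \<partial>lborel) = ennreal (m * ln b - m * ln a)"
proof (rule nn_integral_has_integral_lebesgue)
  show "((\<lambda>t. m / t) has_integral m * ln b - m * ln a) {a..b}"
  proof (rule fundamental_theorem_of_calculus[OF \<open>a \<le> b\<close>])
    fix t
    assume "t \<in> {a..b}"
    with \<open>0 < a\<close> have "0 < t"
      by simp
    then show "((\<lambda>t. m * ln t) has_vector_derivative m / t) (at t within {a..b})"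
      by (auto intro!: derivative_eq_intros simp: has_real_derivative_iff_has_vector_derivative[symmetric])
  qed
qed (use assms in auto)

lemma nn_integral_inverse_at_0_infinite:
  assumes "0 < \<delta>" "0 < m"
  shows "(\<integral>\<^sup>+ t. indicator {0<..\<delta>} t * ennreal (m / t) \<partial>lborel) = \<infinity>"
    (is "?I = \<infinity>")
proof -
  have ln_le: "ennreal (m * ln \<delta> - m * ln \<epsilon>) \<le> ?I" if "0 < \<epsilon>" "\<epsilon> \<le> \<delta>" for \<epsilon>
  proof -
    have "(\<integral>\<^sup>+ t. ennreal (indicator {\<epsilon>..\<delta>} t * (m / t)) \<partial>lborel) = ennreal (m * ln \<delta> - m * ln \<epsilon>)"
      using that \<open>0 < m\<close> by (intro nn_integral_inverse_interval) auto
    moreover have "(\<integral>\<^sup>+ t. ennreal (indicator {\<epsilon>..\<delta>} t * (m / t)) \<partial>lborel) \<le> ?I"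
      using \<open>0 < \<epsilon>\<close> by (intro nn_integral_mono) (auto split: split_indicator)
    ultimately show ?thesis
      by simp
  qed
  show ?thesis
  proof (rule ccontr)
    assume "?I \<noteq> \<infinity>"
    then have "?I < \<infinity>"
      by (simp add: top.not_eq_extremum)
    then obtain r where "0 \<le> r" and r: "?I = ennreal r"
      by (auto simp: less_top_ennreal)
    define \<epsilon> where "\<epsilon> = \<delta> * exp (- (r + 1) / m)"
    have "exp (- (r + 1) / m) \<le> 1"
      using \<open>0 \<le> r\<close> \<open>0 < m\<close> by (simp add: divide_nonpos_pos)
    then have "0 < \<epsilon>" "\<epsilon> \<le> \<delta>"
      using \<open>0 < \<delta>\<close> by (simp_all add: \<epsilon>_def mult_left_le)
    moreover have "m * ln \<delta> - m * ln \<epsilon> = r + 1"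
      using assms by (simp add: \<epsilon>_def ln_mult distrib_left)
    ultimately have "ennreal (r + 1) \<le> ennreal r"
      using ln_le[of \<epsilon>] r by simp
    with \<open>0 \<le> r\<close> show False
      by (simp add: ennreal_le_iff)
  qed
qed

theorem lemmaB3:
  fixes S :: "real \<Rightarrow> ('a::{real_inner, complete_space} \<Rightarrow>\<^sub>L 'a)"
    and A :: "'a \<Rightarrow> 'a" and DA :: "'a set"
    and Q :: "'a \<Rightarrow>\<^sub>L 'a" and M0 w \<gamma>0 :: real
  assumes nontriv: "\<exists>x::'a. x \<noteq> 0"
    and sep: "separable_space (euclidean :: 'a topology)"
    and gen: "is_generator S DA (\<lambda>x. - A x)"
    and M0: "M0 \<ge> 1" and w: "w > 0"
    and bound: "\<forall>t\<ge>0. norm (S t) \<le> M0 * exp (- w * t)"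
    and Q: "pos_def_op Q"
    and \<gamma>0: "\<gamma>0 \<le> 1/2"
  shows "(\<integral>\<^sup>+ t. indicator {0<..} t *
            hs_norm_sq ((t powr (\<gamma>0 - 1)) *\<^sub>R (S t o\<^sub>L op_sqrt Q)) \<partial>lborel) = \<infinity>"
proof -
  obtain e where e: "e \<in> (SOME B. orthonormal_basis B)" and "op_sqrt Q e \<noteq> 0"
    using some_orthonormal_basis_unit_vector[OF sep nontriv] op_sqrt_apply_nonzero[OF Q]
    by (metis norm_zero zero_neq_one)
  define m where "m = (norm (op_sqrt Q e))\<^sup>2 / 4"
  have "0 < m"
    using \<open>op_sqrt Q e \<noteq> 0\<close> by (simp add: m_def)
  have "c0_semigroup S"
    using gen by (simp add: is_generator_def)
  then obtain \<delta> where "0 < \<delta>" "\<delta> \<le> 1"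
    and near_0: "\<And>t. 0 < t \<Longrightarrow> t \<le> \<delta> \<Longrightarrow> m \<le> (norm ((S t o\<^sub>L op_sqrt Q) e))\<^sup>2"
    using c0_semigroup_norm_bound_near_0[of S "op_sqrt Q e"] \<open>op_sqrt Q e \<noteq> 0\<close>
    unfolding m_def by auto
  have "indicator {0<..\<delta>} t * ennreal (m / t)
      \<le> indicator {0<..} t * hs_norm_sq ((t powr (\<gamma>0 - 1)) *\<^sub>R (S t o\<^sub>L op_sqrt Q))" for t
    using hs_norm_sq_powr_scaleR_ge[OF e, of t \<gamma>0 m] near_0[of t] \<open>\<delta> \<le> 1\<close> \<gamma>0
    by (cases "0 < t \<and> t \<le> \<delta>") (auto split: split_indicator)
  then have "(\<integral>\<^sup>+ t. indicator {0<..\<delta>} t * ennreal (m / t) \<partial>lborel)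
      \<le> (\<integral>\<^sup>+ t. indicator {0<..} t *
            hs_norm_sq ((t powr (\<gamma>0 - 1)) *\<^sub>R (S t o\<^sub>L op_sqrt Q)) \<partial>lborel)"
    by (rule nn_integral_mono)
  then show ?thesis
    using nn_integral_inverse_at_0_infinite[OF \<open>0 < \<delta>\<close> \<open>0 < m\<close>] by (simp add: top_unique)
qed

end
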